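(* Let $f_i:\mathbb{R}^p\to\mathbb{R}$, $1\le i\le n$, be $L_i$-smooth for some $L_i>0$, and suppose $f=\frac1n\sum_{i=1}^nf_i$ takes the form $f(x)=g(Hx)$ for an $\alpha$-strongly convex ($\alpha>0$) and $\mathbf{L}$-smooth function $g:\mathbb{R}^m\to\mathbb{R}$ and $H\in\mathbb{R}^{m\times p}$, and that the set $X^*$ of minimizers of $f$ is nonempty. Assume one of the following holds: (1) each $f_i$ is bounded below, $1\le i\le n$; (2) $f_i(x)=f_i(x+v)$ for all $x\in\mathbb{R}^p$, all $v\in\mathrm{Ker}(H)$ and all $1\le i\le n$. Then $$\sup_{x\in X^*}\Big(\sum_{j=1}^n\|\nabla f_j(x)\|^2\Big)^{1/2}<\infty.$$
   Context: $h$ is $L$-smooth if $\|\nabla h(x)-\nabla h(y)\|\le L\|x-y\|$ for all $x,y$; $\alpha$-strongly convex if $h(y)\ge h(x)+\langle y-x,\nabla h(x)\rangle+\frac\alpha2\|y-x\|^2$ for all $x,y$. $X^*=\{x\in\mathbb{R}^p: f(x)=\min f\}$. Norms are Euclidean. *)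

theory Defs
  imports "HOL-Analysis.Analysis"
begin

definition grad :: "('a::euclidean_space \<Rightarrow> real) \<Rightarrow> 'a \<Rightarrow> 'a" where
  "grad f x = (SOME v. (f has_derivative (\<lambda>h. v \<bullet> h)) (at x))"

definition smooth :: "real \<Rightarrow> ('a::euclidean_space \<Rightarrow> real) \<Rightarrow> bool" where
  "smooth L f \<longleftrightarrow> (\<forall>x. f differentiable (at x)) \<and>
     (\<forall>x y. norm (grad f x - grad f y) \<le> L * norm (x - y))"

definition strongly_convex :: "real \<Rightarrow> ('a::euclidean_space \<Rightarrow> real) \<Rightarrow> bool" where
  "strongly_convex \<alpha> h \<longleftrightarrow>
     (\<forall>x y. h y \<ge> h x + (y - x) \<bullet> grad h x + \<alpha> / 2 * (norm (y - x))\<^sup>2)"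

definition minimizers :: "('a \<Rightarrow> real) \<Rightarrow> 'a set" where
  "minimizers f = {x. \<forall>y. f x \<le> f y}"

end

theory Submission
  imports Defs
begin

text \<open>On \<open>X\<^sup>*\<close> the sum \<open>\<Sum>i. f\<^sub>i\<close> is constant. If every \<open>f\<^sub>i\<close> is bounded below, an \<open>L\<^sub>i\<close>-smooth
  function satisfies \<open>\<parallel>\<nabla>f\<^sub>i x\<parallel>\<^sup>2 \<le> 4 L\<^sub>i (f\<^sub>i x - inf f\<^sub>i)\<close> (one gradient step from \<open>x\<close> cannot go
  below the infimum), and \<open>f\<^sub>i x - inf f\<^sub>i\<close> is dominated by the constant \<open>\<Sum>\<^sub>k (f\<^sub>k x - inf f\<^sub>k)\<close>.
  Otherwise, strong convexity of \<open>g\<close> forces \<open>H x\<close> to be the same for all \<open>x \<in> X\<^sup>*\<close>, so any two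
  minimizers differ by a vector of \<open>Ker H\<close>; invariance of the \<open>f\<^sub>i\<close> along \<open>Ker H\<close> makes
  their gradients, hence the supremum, constant on \<open>X\<^sup>*\<close>.\<close>

lemma has_derivative_grad:
  fixes f :: "'a::euclidean_space \<Rightarrow> real"
  assumes "f differentiable (at x)"
  shows "(f has_derivative (\<lambda>h. grad f x \<bullet> h)) (at x)"
proof -
  obtain f' where f': "(f has_derivative f') (at x)"
    using assms unfolding differentiable_def by blast
  then have "linear f'" by (rule has_derivative_linear)
  define v where "v = (\<Sum>b\<in>Basis. f' b *\<^sub>R b)"
  have "f' = (\<lambda>h. v \<bullet> h)"
  proof
    fix h
    have "f' h = f' (\<Sum>b\<in>Basis. (h \<bullet> b) *\<^sub>R b)" by (simp add: euclidean_representation)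
    also have "\<dots> = (\<Sum>b\<in>Basis. (h \<bullet> b) * f' b)"
      using \<open>linear f'\<close> by (simp add: linear_sum linear_scale)
    also have "\<dots> = v \<bullet> h"
      unfolding v_def by (simp add: inner_sum_right inner_commute mult.commute)
    finally show "f' h = v \<bullet> h" .
  qed
  with f' have "\<exists>v. (f has_derivative (\<lambda>h. v \<bullet> h)) (at x)" by blast
  then show ?thesis unfolding grad_def by (rule someI_ex)
qed

lemma grad_eqI:
  fixes f :: "'a::euclidean_space \<Rightarrow> real"
  assumes "(f has_derivative (\<lambda>h. D \<bullet> h)) (at x)"
  shows "grad f x = D"
proof -
  have "f differentiable (at x)" using assms unfolding differentiable_def by blast
  then have "(f has_derivative (\<lambda>h. grad f x \<bullet> h)) (at x)" by (rule has_derivative_grad)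
  then have "(\<lambda>h. grad f x \<bullet> h) = (\<lambda>h. D \<bullet> h)" using assms by (rule has_derivative_unique)
  from fun_cong[OF this, of "grad f x - D"] have "(grad f x - D) \<bullet> (grad f x - D) = 0"
    by (simp add: inner_diff_left)
  then show ?thesis by simp
qed

lemma grad_translation_invariant:
  fixes h :: "'a::euclidean_space \<Rightarrow> real"
  assumes "h differentiable (at x)" and periodic: "\<forall>y. h (y + v) = h y"
  shows "grad h (x + v) = grad h x"
proof -
  have "((\<lambda>y. y - v) has_derivative (\<lambda>k. k)) (at (x + v))"
    by (auto intro!: derivative_eq_intros)
  from has_derivative_compose[OF this, of h] has_derivative_grad[OF assms(1)]
  have "((\<lambda>y. h (y - v)) has_derivative (\<lambda>k. grad h x \<bullet> k)) (at (x + v))" by simp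
  moreover have "(\<lambda>y. h (y - v)) = h"
  proof
    fix y
    show "h (y - v) = h y" using periodic[rule_format, of "y - v"] by simp
  qed
  ultimately show ?thesis by (simp add: grad_eqI)
qed

text \<open>A crude form of the descent lemma (constant \<open>L\<close> instead of \<open>L/2\<close>), obtained from the
  mean value theorem on the segment from \<open>x\<close> to \<open>x + d\<close>.\<close>

lemma smooth_upper_bound:
  fixes h :: "'a::euclidean_space \<Rightarrow> real"
  assumes sm: "smooth L h" and "L \<ge> 0"
  shows "h (x + d) \<le> h x + grad h x \<bullet> d + L * (norm d)\<^sup>2"
proof -
  define G where "G = grad h x"
  define \<psi> where "\<psi> t = h (x + t *\<^sub>R d) - t * (G \<bullet> d)" for t
  have hd: "\<And>z. (h has_derivative (\<lambda>k. grad h z \<bullet> k)) (at z)"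
    using sm unfolding smooth_def by (blast intro: has_derivative_grad)
  have der: "DERIV \<psi> t :> (grad h (x + t *\<^sub>R d) - G) \<bullet> d" for t
  proof -
    have "((\<lambda>t. x + t *\<^sub>R d) has_derivative (\<lambda>s. s *\<^sub>R d)) (at t)"
      by (auto intro!: derivative_eq_intros)
    from has_derivative_compose[OF this hd]
    have "((\<lambda>t. h (x + t *\<^sub>R d)) has_derivative (\<lambda>s. grad h (x + t *\<^sub>R d) \<bullet> (s *\<^sub>R d))) (at t)"
      by (simp add: o_def)
    then have "(\<psi> has_derivative (\<lambda>s. grad h (x + t *\<^sub>R d) \<bullet> (s *\<^sub>R d) - s * (G \<bullet> d))) (at t)"
      unfolding \<psi>_def by (auto intro!: derivative_eq_intros)
    moreover have "(\<lambda>s. grad h (x + t *\<^sub>R d) \<bullet> (s *\<^sub>R d) - s * (G \<bullet> d)) =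
        (*) ((grad h (x + t *\<^sub>R d) - G) \<bullet> d)"
      by (auto simp: algebra_simps inner_diff_left)
    ultimately show ?thesis unfolding has_field_derivative_def by simp
  qed
  obtain z where z: "0 < z" "z < 1" and mvt: "\<psi> 1 - \<psi> 0 = (grad h (x + z *\<^sub>R d) - G) \<bullet> d"
    using MVT2[of 0 1 \<psi> "\<lambda>t. (grad h (x + t *\<^sub>R d) - G) \<bullet> d"] der by auto
  have "(grad h (x + z *\<^sub>R d) - G) \<bullet> d \<le> norm (grad h (x + z *\<^sub>R d) - G) * norm d"
    using norm_cauchy_schwarz by (rule order_trans[rotated]) simp
  also have "\<dots> \<le> L * norm (z *\<^sub>R d) * norm d"
  proof (rule mult_right_mono)
    show "norm (grad h (x + z *\<^sub>R d) - G) \<le> L * norm (z *\<^sub>R d)"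
      using sm unfolding smooth_def G_def by (metis add_diff_cancel_left')
  qed simp
  also have "\<dots> = z * (L * (norm d)\<^sup>2)"
    using z by (simp add: power2_eq_square)
  also have "\<dots> \<le> L * (norm d)\<^sup>2"
    using z \<open>L \<ge> 0\<close> by (simp add: mult_left_le_one_le)
  finally show ?thesis using mvt unfolding \<psi>_def G_def by simp
qed

lemma smooth_bounded_below_grad_bound:
  fixes h :: "'a::euclidean_space \<Rightarrow> real"
  assumes sm: "smooth L h" and "L > 0" and lower: "\<forall>y. m \<le> h y"
  shows "(norm (grad h x))\<^sup>2 \<le> 4 * L * (h x - m)"
proof -
  define G where "G = grad h x"
  define c where "c = 1 / (2 * L)"
  have "G \<bullet> (c *\<^sub>R G) = c * (norm G)\<^sup>2"
    by (simp add: dot_square_norm)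
  moreover have "L * (norm (c *\<^sub>R G))\<^sup>2 = c / 2 * (norm G)\<^sup>2"
    using \<open>L > 0\<close> unfolding c_def by (simp add: power_mult_distrib power2_eq_square)
  moreover have "h (x - c *\<^sub>R G) \<le> h x - G \<bullet> (c *\<^sub>R G) + L * (norm (c *\<^sub>R G))\<^sup>2"
    using smooth_upper_bound[OF sm, of x "- c *\<^sub>R G"] \<open>L > 0\<close> unfolding G_def by simp
  moreover have "m \<le> h (x - c *\<^sub>R G)" using lower by blast
  ultimately have "c / 2 * (norm G)\<^sup>2 \<le> h x - m" by linarith
  then show ?thesis using \<open>L > 0\<close> unfolding G_def c_def by (simp add: field_simps)
qed

lemma sum_grad_norm_sq_le:
  fixes h :: "'i \<Rightarrow> 'a::euclidean_space \<Rightarrow> real"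
  assumes "finite I"
    and sm: "\<forall>i\<in>I. smooth (L i) (h i)" and L_pos: "\<forall>i\<in>I. L i > 0"
    and bdd: "\<forall>i\<in>I. bdd_below (range (h i))"
  shows "(\<Sum>j\<in>I. (norm (grad (h j) x))\<^sup>2)
           \<le> (\<Sum>j\<in>I. 4 * L j) * (\<Sum>k\<in>I. h k x - Inf (range (h k)))"
proof -
  have gap_nonneg: "0 \<le> h k x - Inf (range (h k))" if "k \<in> I" for k
    using bdd that by (simp add: cInf_lower)
  have "(norm (grad (h j) x))\<^sup>2 \<le> 4 * L j * (\<Sum>k\<in>I. h k x - Inf (range (h k)))" if j: "j \<in> I" for j
  proof -
    have "(norm (grad (h j) x))\<^sup>2 \<le> 4 * L j * (h j x - Inf (range (h j)))"
      using sm L_pos bdd j by (intro smooth_bounded_below_grad_bound) (auto intro: cInf_lower)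
    also have "\<dots> \<le> 4 * L j * (\<Sum>k\<in>I. h k x - Inf (range (h k)))"
      using L_pos j gap_nonneg \<open>finite I\<close> by (intro mult_left_mono member_le_sum) auto
    finally show ?thesis .
  qed
  then have "(\<Sum>j\<in>I. (norm (grad (h j) x))\<^sup>2)
               \<le> (\<Sum>j\<in>I. 4 * L j * (\<Sum>k\<in>I. h k x - Inf (range (h k))))"
    by (rule sum_mono)
  then show ?thesis by (simp only: sum_distrib_right)
qed

lemma strongly_convex_midpoint:
  assumes "strongly_convex \<alpha> g"
  shows "2 * g c + \<alpha> * (norm e)\<^sup>2 \<le> g (c + e) + g (c - e)"
  using assms[unfolded strongly_convex_def, rule_format, of c "c + e"]
    assms[unfolded strongly_convex_def, rule_format, of c "c - e"]
  by (simp add: inner_minus_left)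

lemma minimizers_strongly_convex_comp_linear:
  fixes A :: "'a::real_vector \<Rightarrow> 'b::euclidean_space"
  assumes "linear A" and "\<alpha> > 0" and "strongly_convex \<alpha> g"
    and x: "x \<in> minimizers (\<lambda>x. g (A x))" and y: "y \<in> minimizers (\<lambda>x. g (A x))"
  shows "A x = A y"
proof -
  define c where "c = (1/2) *\<^sub>R (A x + A y)"
  define e where "e = (1/2) *\<^sub>R (A x - A y)"
  have "A x = c + e" "A y = c - e"
    unfolding c_def e_def by (simp_all add: algebra_simps flip: scaleR_add_left)
  moreover have "A ((1/2) *\<^sub>R (x + y)) = c"
    unfolding c_def using \<open>linear A\<close> by (simp add: linear_add linear_scale)
  moreover have "g (A x) \<le> g (A ((1/2) *\<^sub>R (x + y)))" "g (A y) \<le> g (A ((1/2) *\<^sub>R (x + y)))"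
    using x y unfolding minimizers_def by auto
  ultimately have "\<alpha> * (norm e)\<^sup>2 \<le> 0"
    using strongly_convex_midpoint[OF \<open>strongly_convex \<alpha> g\<close>, of c e] by simp
  then have "e = 0" using \<open>\<alpha> > 0\<close> by (simp add: mult_le_0_iff)
  then show ?thesis using \<open>A x = c + e\<close> \<open>A y = c - e\<close> by simp
qed

lemma grad_eq_on_minimizers_strongly_convex_comp_linear:
  fixes A :: "'a::euclidean_space \<Rightarrow> 'b::euclidean_space"
  assumes "linear A" and "\<alpha> > 0" and "strongly_convex \<alpha> g"
    and "h differentiable (at x)" and ker_invariant: "\<forall>z v. A v = 0 \<longrightarrow> h (z + v) = h z"
    and "x \<in> minimizers (\<lambda>x. g (A x))" and "y \<in> minimizers (\<lambda>x. g (A x))"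
  shows "grad h y = grad h x"
proof -
  have "A (y - x) = 0"
    using minimizers_strongly_convex_comp_linear assms by (simp add: linear_diff)
  with ker_invariant have "grad h (x + (y - x)) = grad h x"
    by (intro grad_translation_invariant[OF \<open>h differentiable (at x)\<close>]) blast
  then show ?thesis by simp
qed

lemma minimizers_value_eq: "x \<in> minimizers f \<Longrightarrow> y \<in> minimizers f \<Longrightarrow> f x = f y"
  unfolding minimizers_def by (auto intro: order_antisym)

theorem lemma2p14:
  fixes n :: nat
    and fi :: "nat \<Rightarrow> real^'p \<Rightarrow> real"
    and L :: "nat \<Rightarrow> real"
    and g :: "real^'m \<Rightarrow> real"
    and H :: "real^'p^'m"
    and \<alpha> Lg :: real
    and f :: "real^'p \<Rightarrow> real"
  assumes n_pos: "n \<ge> 1"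
    and L_pos: "\<forall>i\<in>{1..n}. L i > 0"
    and fi_smooth: "\<forall>i\<in>{1..n}. smooth (L i) (fi i)"
    and f_def: "\<forall>x. f x = (1 / real n) * (\<Sum>i=1..n. fi i x)"
    and f_comp: "\<forall>x. f x = g (H *v x)"
    and alpha_pos: "\<alpha> > 0"
    and g_sc: "strongly_convex \<alpha> g"
    and g_smooth: "smooth Lg g"
    and Xstar_ne: "minimizers f \<noteq> {}"
    and cases: "(\<forall>i\<in>{1..n}. bdd_below (range (fi i))) \<or>
                (\<forall>i\<in>{1..n}. \<forall>x v. H *v v = 0 \<longrightarrow> fi i (x + v) = fi i x)"
  shows "bdd_above ((\<lambda>x. sqrt (\<Sum>j=1..n. (norm (grad (fi j) x))\<^sup>2)) ` minimizers f)"
proof -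
  obtain x0 where x0: "x0 \<in> minimizers f" using Xstar_ne by blast
  have f_eq: "f = (\<lambda>x. g (H *v x))" using f_comp by blast
  have sum_const: "(\<Sum>k=1..n. fi k x) = (\<Sum>k=1..n. fi k x0)" if "x \<in> minimizers f" for x
    using minimizers_value_eq[OF that x0] f_def n_pos by simp
  from cases show ?thesis
  proof
    assume bdd: "\<forall>i\<in>{1..n}. bdd_below (range (fi i))"
    have "(\<Sum>j=1..n. (norm (grad (fi j) x))\<^sup>2)
            \<le> (\<Sum>j=1..n. 4 * L j) * (\<Sum>k=1..n. fi k x0 - Inf (range (fi k)))"
      if "x \<in> minimizers f" for x
    proof -
      have "(\<Sum>j=1..n. (norm (grad (fi j) x))\<^sup>2)
              \<le> (\<Sum>j=1..n. 4 * L j) * (\<Sum>k=1..n. fi k x - Inf (range (fi k)))"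
        using sum_grad_norm_sq_le[OF _ fi_smooth L_pos bdd] by simp
      also have "(\<Sum>k=1..n. fi k x - Inf (range (fi k))) = (\<Sum>k=1..n. fi k x0 - Inf (range (fi k)))"
        using sum_const[OF that] by (simp add: sum_subtractf)
      finally show ?thesis .
    qed
    then show ?thesis by (auto intro!: bdd_aboveI2 real_sqrt_le_mono)
  next
    assume inv: "\<forall>i\<in>{1..n}. \<forall>x v. H *v v = 0 \<longrightarrow> fi i (x + v) = fi i x"
    have "grad (fi j) x = grad (fi j) x0" if "x \<in> minimizers f" and "j \<in> {1..n}" for x j
      using fi_smooth inv that x0 unfolding f_eq smooth_def
      by (intro grad_eq_on_minimizers_strongly_convex_comp_linear[OF matrix_vector_mul_linear alpha_pos g_sc])
        auto
    then have "(\<lambda>x. sqrt (\<Sum>j=1..n. (norm (grad (fi j) x))\<^sup>2)) ` minimizers f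
                 \<subseteq> {sqrt (\<Sum>j=1..n. (norm (grad (fi j) x0))\<^sup>2)}"
      by (auto intro!: sum.cong)
    then show ?thesis by (rule bdd_above_mono[rotated]) simp
  qed
qed

end
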